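(* Let $N_{\mathsf s}\ge1$ be a fixed integer, $\beta\in(0,\infty)$, and for each integer $N_{\mathsf h}\ge1$ set $N=N_{\mathsf s}N_{\mathsf h}$ and let $K=K_N$ be a positive integer with $K_N/N\to\beta$. Let $\boldsymbol{S}\in\mathbb{R}^{N\times K}$ have independent columns, each an $(N_{\mathsf s},N_{\mathsf h})$-sequence, and let $\lambda_1,\dots,\lambda_N$ be the eigenvalues of $\boldsymbol{S}\boldsymbol{S}^{\mathsf T}$. Then $\frac1N\sum_{i=1}^N\lambda_i=K/N$ surely, and, as $N\to\infty$, \[ \frac1N\sum_{i=1}^N\lambda_i^2\ \xrightarrow{p}\ \beta(1+\beta). \] Consequently, with $\eta_{\min}:=\beta\ln 2/\mathbb{E}[\lambda]$ and $\mathcal S_0:=2(\mathbb{E}[\lambda])^2/\mathbb{E}[\lambda^2]$ computed from these empirical moments, $\eta_{\min}=\ln2$ and $\mathcal S_0\to 2\beta/(1+\beta)$ in probability.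
   Context: An $(N_{\mathsf s},N_{\mathsf h})$-sequence is a random vector $\boldsymbol{s}\in\mathbb{R}^N$, $N=N_{\mathsf s}N_{\mathsf h}$, such that for each $m=1,\dots,N_{\mathsf s}$ the block $(s_{1+(m-1)N_{\mathsf h}},\dots,s_{mN_{\mathsf h}})$ has exactly one nonzero entry, whose position within the block is uniform and whose value is $\pm1/\sqrt{N_{\mathsf s}}$ with equal probability, all choices independent. $\xrightarrow{p}$ denotes convergence in probability. $\eta_{\min}$ is the minimum energy per bit over noise level and $\mathcal S_0$ the wideband slope of optimum-decoding spectral efficiency. *)

theory Defs
  imports "HOL-Probability.Probability" "Jordan_Normal_Form.Char_Poly"
begin

text \<open>Distribution of one (Ns,Nh)-sequence in R^N, N = Ns*Nh (coordinates indexed 0..N-1;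
  entries outside this range are 0).  For every block m < Ns an independent uniform choice of a
  position p < Nh inside the block and a uniform sign b; the block's only nonzero entry,
  at index m*Nh + p, is (+/-1)/sqrt Ns.\<close>
definition seq_pmf :: "nat \<Rightarrow> nat \<Rightarrow> (nat \<Rightarrow> real) pmf" where
  "seq_pmf Ns Nh =
     map_pmf
       (\<lambda>c i. if i < Ns * Nh \<and> i mod Nh = fst (c (i div Nh))
              then (if snd (c (i div Nh)) then 1 else -1) / sqrt (real Ns) else 0)
       (Pi_pmf {..<Ns} (0, True) (\<lambda>_. pmf_of_set ({..<Nh} \<times> (UNIV :: bool set))))"

definition S_pmf :: "nat \<Rightarrow> nat \<Rightarrow> nat \<Rightarrow> real mat pmf" where
  "S_pmf Ns Nh K =
     map_pmf (\<lambda>cols. mat (Ns * Nh) K (\<lambda>(i, k). cols k i))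
       (Pi_pmf {..<K} (\<lambda>_. 0) (\<lambda>_. seq_pmf Ns Nh))"

definition eig_list :: "real mat \<Rightarrow> complex list" where
  "eig_list A = (SOME as. char_poly (map_mat complex_of_real A) = (\<Prod>a\<leftarrow>as. [:- a, 1:])
                          \<and> length as = dim_row A)"

definition eig_moment :: "nat \<Rightarrow> real mat \<Rightarrow> complex" where
  "eig_moment k A = (\<Sum>z\<leftarrow>eig_list A. z ^ k) / of_nat (dim_row A)"

end

theory Submission
  imports Defs "Jordan_Normal_Form.Schur_Decomposition"
begin

text \<open>
  By Schur triangularisation the eigenvalue power sums of \<open>S S\<^sup>T\<close> are traces of its powers.
  Hence the first moment is \<open>(1/N) \<Sum>\<^sub>k |s\<^sub>k|\<^sup>2 = K/N\<close>, every column having unit norm, and the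
  second is \<open>(1/N) \<Sum>\<^sub>k\<^sub>,\<^sub>l \<langle>s\<^sub>k, s\<^sub>l\<rangle>\<^sup>2 = K/N + (1/N) \<Sum>\<^sub>k\<^sub>\<noteq>\<^sub>l \<langle>s\<^sub>k, s\<^sub>l\<rangle>\<^sup>2\<close>.
  An \<open>(N\<^sub>s, N\<^sub>h)\<close>-sequence is isotropic, \<open>E[s s\<^sup>T] = I/N\<close>, so each off-diagonal term has mean
  \<open>1/N\<close>; it lies in \<open>[0, 1]\<close>, and the deviations of two distinct unordered pairs are uncorrelated.
  The off-diagonal sum therefore has variance at most \<open>2K\<^sup>2/N\<close>, and Chebyshev's inequality gives
  the second moment \<open>\<rightarrow> \<beta>(1 + \<beta>)\<close> in probability.  The statements about \<open>\<eta>\<^sub>m\<^sub>i\<^sub>n\<close> and \<open>S\<^sub>0\<close>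
  follow by continuity.
\<close>

section \<open>Traces and eigenvalues\<close>

definition trace :: "'a::comm_ring_1 mat \<Rightarrow> 'a" where
  "trace A = (\<Sum>i<dim_row A. A $$ (i, i))"

lemma trace_mult_eq_sum:
  assumes "X \<in> carrier_mat n m" "Y \<in> carrier_mat m n"
  shows "trace (X * Y) = (\<Sum>i<n. \<Sum>j<m. X $$ (i, j) * Y $$ (j, i))"
  using assms unfolding trace_def
  by (auto simp: scalar_prod_def atLeast0LessThan intro!: sum.cong)

lemma trace_mult_comm:
  assumes "X \<in> carrier_mat n m" "Y \<in> carrier_mat m n"
  shows "trace (X * Y) = trace (Y * X)"
  unfolding trace_mult_eq_sum[OF assms] trace_mult_eq_sum[OF assms(2,1)]
  by (subst sum.swap) (simp add: mult.commute)

lemma trace_similar_mat_wit: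
  assumes "similar_mat_wit A B P Q"
  shows "trace A = trace B"
proof -
  define n where "n = dim_row A"
  from similar_mat_witD[OF n_def assms]
  have B: "B \<in> carrier_mat n n" and P: "P \<in> carrier_mat n n" and Q: "Q \<in> carrier_mat n n"
    and QP: "Q * P = 1\<^sub>m n" and A: "A = P * B * Q" by auto
  have "trace A = trace (Q * (P * B))"
    unfolding A by (rule trace_mult_comm[of _ n n]) (use P B Q in auto)
  also have "Q * (P * B) = B"
    using B P Q QP by (simp add: assoc_mult_mat[symmetric, of Q n n P n B n])
  finally show ?thesis .
qed

lemma upper_triangular_mult:
  assumes B: "B \<in> carrier_mat n n" "upper_triangular B"
    and C: "C \<in> carrier_mat n n" "upper_triangular C"
  shows "upper_triangular (B * C)"
    and "\<And>i. i < n \<Longrightarrow> (B * C) $$ (i, i) = B $$ (i, i) * C $$ (i, i)"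
proof -
  have "(B * C) $$ (i, j) = (\<Sum>l\<in>{i..j}. B $$ (i, l) * C $$ (l, j))" if "i < n" "j < n" for i j
  proof -
    have "\<And>l. l < n \<Longrightarrow> l < i \<or> j < l \<Longrightarrow> B $$ (i, l) * C $$ (l, j) = 0"
      using B C that by (auto dest: upper_triangularD)
    then show ?thesis
      using B C that by (auto simp: scalar_prod_def atLeast0LessThan intro!: sum.mono_neutral_right)
  qed
  then show "upper_triangular (B * C)" "\<And>i. i < n \<Longrightarrow> (B * C) $$ (i, i) = B $$ (i, i) * C $$ (i, i)"
    using B C by (auto intro!: upper_triangularI)
qed

lemma upper_triangular_pow:
  assumes "B \<in> carrier_mat n n" "upper_triangular B"
  shows "upper_triangular (B ^\<^sub>m k) \<and> (\<forall>i<n. (B ^\<^sub>m k) $$ (i, i) = B $$ (i, i) ^ k)"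
proof (induction k)
  case (Suc k)
  then show ?case
    using upper_triangular_mult[OF pow_carrier_mat[OF assms(1)] _ assms, of k]
    by (simp add: power_Suc2 del: power_Suc)
qed (use assms in auto)

lemma eig_list_char_poly:
  assumes "A \<in> carrier_mat n n"
  shows "char_poly (map_mat complex_of_real A) = (\<Prod>a\<leftarrow>eig_list A. [:- a, 1:])"
proof -
  have "\<exists>as. char_poly (map_mat complex_of_real A) = (\<Prod>a\<leftarrow>as. [:- a, 1:])
          \<and> length as = dim_row A"
    using char_poly_factorized[of "map_mat complex_of_real A" n] assms by auto
  from someI_ex[OF this] show ?thesis
    unfolding eig_list_def by blast
qed

lemma sum_eig_list_power:
  assumes A: "A \<in> carrier_mat n n"
  shows "(\<Sum>z\<leftarrow>eig_list A. z ^ k) = complex_of_real (trace (A ^\<^sub>m k))"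
proof -
  define C where "C = map_mat complex_of_real A"
  have C: "C \<in> carrier_mat n n" using A by (simp add: C_def)
  obtain B P Q where BPQ: "schur_decomposition C (eig_list A) = (B, P, Q)"
    by (cases "schur_decomposition C (eig_list A)") auto
  from schur_decomposition[OF C eig_list_char_poly[OF A, folded C_def] BPQ]
  have sim: "similar_mat_wit C B P Q" and ut: "upper_triangular B" and diag: "diag_mat B = eig_list A"
    by auto
  have B: "B \<in> carrier_mat n n" using similar_mat_witD2[OF C sim] by auto
  have "(\<Sum>z\<leftarrow>eig_list A. z ^ k) = (\<Sum>i<n. B $$ (i, i) ^ k)"
    unfolding diag[symmetric] diag_mat_def using B by (simp add: sum_list_sum_nth atLeast0LessThan)
  also have "\<dots> = trace (B ^\<^sub>m k)"
    using upper_triangular_pow[OF B ut, of k] B by (simp add: trace_def)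
  also have "\<dots> = trace (C ^\<^sub>m k)"
    using trace_similar_mat_wit[OF similar_mat_wit_pow[OF sim]] by simp
  also have "C ^\<^sub>m k = map_mat complex_of_real (A ^\<^sub>m k)"
    unfolding C_def by (rule of_real_hom.mat_hom_pow[OF A, symmetric])
  finally show ?thesis
    using A by (simp add: trace_def of_real_sum)
qed

lemma eig_moment_eq_trace:
  assumes "A \<in> carrier_mat n n"
  shows "eig_moment k A = complex_of_real (trace (A ^\<^sub>m k) / real n)"
  using sum_eig_list_power[OF assms] assms by (simp add: eig_moment_def)

lemma set_Pi_pmfD:
  assumes "finite A" "f \<in> set_pmf (Pi_pmf A d p)" "x \<in> A"
  shows "f x \<in> set_pmf (p x)"
  using assms by (auto simp: set_Pi_pmf PiE_dflt_def)

lemma finite_set_Pi_pmf: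
  assumes "finite A" "\<And>x. x \<in> A \<Longrightarrow> finite (set_pmf (p x))"
  shows "finite (set_pmf (Pi_pmf A d p))"
  using assms by (simp add: set_Pi_pmf finite_PiE_dflt)

lemma integral_eq_const_on_support:
  fixes g :: "'a \<Rightarrow> real"
  assumes "\<And>x. x \<in> set_pmf M \<Longrightarrow> g x = c"
  shows "(\<integral>x. g x \<partial>M) = c"
proof -
  have "(\<integral>x. g x \<partial>M) = (\<integral>x. c \<partial>M)"
    using assms by (intro integral_cong_AE) (auto intro: AE_pmfI)
  then show ?thesis by simp
qed

lemma integral_pair_pmf_finite:
  fixes h :: "'a \<times> 'b \<Rightarrow> real"
  assumes P: "finite (set_pmf P)" and Q: "finite (set_pmf Q)"
  shows "(\<integral>x. h x \<partial>pair_pmf P Q) = (\<integral>b. (\<integral>a. h (a, b) \<partial>P) \<partial>Q)"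
proof -
  have "(\<integral>x. h x \<partial>pair_pmf P Q) = (\<Sum>x\<in>set_pmf P \<times> set_pmf Q. h x * pmf (pair_pmf P Q) x)"
    by (rule integral_measure_pmf_real) (use P Q in auto)
  also have "\<dots> = (\<Sum>a\<in>set_pmf P. \<Sum>b\<in>set_pmf Q. h (a, b) * (pmf P a * pmf Q b))"
    by (auto simp: sum.cartesian_product pmf_pair intro!: sum.cong)
  also have "\<dots> = (\<Sum>b\<in>set_pmf Q. (\<Sum>a\<in>set_pmf P. h (a, b) * pmf P a) * pmf Q b)"
    by (subst sum.swap) (simp add: sum_distrib_right mult.assoc)
  also have "\<dots> = (\<Sum>b\<in>set_pmf Q. (\<integral>a. h (a, b) \<partial>P) * pmf Q b)"
    by (intro sum.cong refl, subst integral_measure_pmf_real[of "set_pmf P"]) (use P in auto)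
  also have "\<dots> = (\<integral>b. (\<integral>a. h (a, b) \<partial>P) \<partial>Q)"
    by (rule integral_measure_pmf_real[symmetric]) (use Q in auto)
  finally show ?thesis .
qed

lemma integral_Pi_pmf_remove:
  fixes g :: "('i \<Rightarrow> 'a) \<Rightarrow> real"
  assumes A: "finite A" and l: "l \<in> A" and fin: "\<And>x. x \<in> A \<Longrightarrow> finite (set_pmf (p x))"
  shows "(\<integral>f. g f \<partial>Pi_pmf A d p) = (\<integral>f. (\<integral>y. g (f(l := y)) \<partial>p l) \<partial>Pi_pmf (A - {l}) d p)"
proof -
  have "Pi_pmf A d p = map_pmf (\<lambda>(y, f). f(l := y)) (pair_pmf (p l) (Pi_pmf (A - {l}) d p))"
    using Pi_pmf_insert[of "A - {l}" l d p] A l by (simp add: insert_absorb)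
  then have "(\<integral>f. g f \<partial>Pi_pmf A d p)
      = (\<integral>x. g ((snd x)(l := fst x)) \<partial>pair_pmf (p l) (Pi_pmf (A - {l}) d p))"
    by (simp add: case_prod_beta)
  also have "\<dots> = (\<integral>f. (\<integral>y. g (f(l := y)) \<partial>p l) \<partial>Pi_pmf (A - {l}) d p)"
    using integral_pair_pmf_finite[where h = "\<lambda>x. g ((snd x)(l := fst x))",
        OF fin[OF l] finite_set_Pi_pmf[of "A - {l}" p d]] A fin
    by simp
  finally show ?thesis .
qed

section \<open>Gram matrices of independent unit isotropic columns\<close>

definition dot :: "nat \<Rightarrow> (nat \<Rightarrow> real) \<Rightarrow> (nat \<Rightarrow> real) \<Rightarrow> real" where
  "dot n u v = (\<Sum>i<n. u i * v i)"

lemma dot_commute: "dot n u v = dot n v u"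
  unfolding dot_def by (simp add: mult.commute)

lemma dot_sq_le_one:
  assumes "dot n u u = 1" "dot n v v = 1"
  shows "(dot n u v)\<^sup>2 \<le> 1"
  using Cauchy_Schwarz_ineq_sum[of u v "{..<n}"] assms by (simp add: dot_def power2_eq_square)

definition gram_sq_sum :: "nat \<Rightarrow> nat \<Rightarrow> (nat \<Rightarrow> nat \<Rightarrow> real) \<Rightarrow> real" where
  "gram_sq_sum n K f = (\<Sum>k<K. \<Sum>l<K. (dot n (f k) (f l))\<^sup>2)"

definition offdiag_pairs :: "nat \<Rightarrow> (nat \<times> nat) set" where
  "offdiag_pairs K = Sigma {..<K} (\<lambda>k. {..<K} - {k})"

lemma finite_offdiag_pairs: "finite (offdiag_pairs K)"
  by (simp add: offdiag_pairs_def)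

lemma card_offdiag_pairs: "real (card (offdiag_pairs K)) = real K * (real K - 1)"
  by (cases K) (simp_all add: offdiag_pairs_def card_SigmaI algebra_simps)

locale unit_isotropic_pmf =
  fixes n :: nat and c :: real and p :: "(nat \<Rightarrow> real) pmf"
  assumes finite_support: "finite (set_pmf p)"
    and unit_norm: "u \<in> set_pmf p \<Longrightarrow> dot n u u = 1"
    and isotropic: "i < n \<Longrightarrow> j < n \<Longrightarrow> (\<integral>v. v i * v j \<partial>p) = (if i = j then c else 0)"
begin

lemma integral_dot_sq:
  assumes u: "u \<in> set_pmf p"
  shows "(\<integral>v. (dot n u v)\<^sup>2 \<partial>p) = c"
proof -
  have "(\<integral>v. (dot n u v)\<^sup>2 \<partial>p) = (\<integral>v. (\<Sum>i<n. \<Sum>j<n. u i * u j * (v i * v j)) \<partial>p)"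
    unfolding dot_def power2_eq_square sum_product by (simp add: algebra_simps)
  also have "\<dots> = (\<Sum>i<n. \<Sum>j<n. u i * u j * (\<integral>v. v i * v j \<partial>p))"
    using finite_support by (simp add: integrable_measure_pmf_finite)
  also have "\<dots> = (\<Sum>i<n. \<Sum>j<n. if i = j then u i * u j * c else 0)"
    by (intro sum.cong refl) (simp add: isotropic)
  also have "\<dots> = (\<Sum>i<n. u i * u i) * c"
    by (simp add: sum_distrib_right)
  finally show ?thesis
    using unit_norm[OF u] by (simp add: dot_def)
qed

lemma isotropy_constant_nonneg: "c \<ge> 0"
proof -
  obtain u where "u \<in> set_pmf p" using set_pmf_not_empty[of p] by blast
  then show ?thesis
    using integral_nonneg_AE[of "\<lambda>v. (dot n u v)\<^sup>2" p] integral_dot_sq by simp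
qed

abbreviation columns :: "nat \<Rightarrow> (nat \<Rightarrow> real) \<Rightarrow> (nat \<Rightarrow> nat \<Rightarrow> real) pmf" where
  "columns K d \<equiv> Pi_pmf {..<K} d (\<lambda>_. p)"

lemma finite_set_columns: "finite (set_pmf (columns K d))"
  using finite_support by (intro finite_set_Pi_pmf) auto

lemma integrable_columns: "integrable (columns K d) (g :: _ \<Rightarrow> real)"
  by (rule integrable_measure_pmf_finite[OF finite_set_columns])

lemma column_in_set_pmf: "f \<in> set_pmf (columns K d) \<Longrightarrow> k < K \<Longrightarrow> f k \<in> set_pmf p"
  using set_Pi_pmfD[of "{..<K}" f d "\<lambda>_. p" k] by simp

lemma integral_dot_sq_columns:
  assumes "k < K" "l < K" "k \<noteq> l"
  shows "(\<integral>f. (dot n (f k) (f l))\<^sup>2 \<partial>columns K d) = c"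
proof -
  have "(\<integral>f. (dot n (f k) (f l))\<^sup>2 \<partial>columns K d)
      = (\<integral>f. (\<integral>y. (dot n (f k) y)\<^sup>2 \<partial>p) \<partial>Pi_pmf ({..<K} - {l}) d (\<lambda>_. p))"
    using assms finite_support by (subst integral_Pi_pmf_remove[where l = l]) auto
  also have "\<dots> = c"
    using assms set_Pi_pmfD[of "{..<K} - {l}" _ d "\<lambda>_. p" k]
    by (intro integral_eq_const_on_support integral_dot_sq) auto
  finally show ?thesis .
qed

definition dot_sq_dev :: "(nat \<Rightarrow> nat \<Rightarrow> real) \<Rightarrow> nat \<times> nat \<Rightarrow> real" where
  "dot_sq_dev f = (\<lambda>(k, l). (dot n (f k) (f l))\<^sup>2 - c)"

lemma dot_sq_dev_swap: "dot_sq_dev f (prod.swap q) = dot_sq_dev f q"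
  by (simp add: dot_sq_dev_def dot_commute split: prod.split)

text \<open>Integrating first over a column that occurs in only one of the two pairs kills the
  product.\<close>
lemma integral_dot_sq_dev_mult_eq_0:
  assumes kl: "(k, l) \<in> offdiag_pairs K" and q: "q \<in> offdiag_pairs K"
    and ne: "q \<noteq> (k, l)" "q \<noteq> (l, k)"
  shows "(\<integral>f. dot_sq_dev f (k, l) * dot_sq_dev f q \<partial>columns K d) = 0"
proof -
  have uncorrelated: "(\<integral>f. dot_sq_dev f (m, j) * dot_sq_dev f q \<partial>columns K d) = 0"
    if "j < K" "m < K" "j \<noteq> m" "j \<noteq> fst q" "j \<noteq> snd q" for j m
  proof -
    obtain a b where ab: "q = (a, b)" by (cases q)
    have "(\<integral>f. dot_sq_dev f (m, j) * dot_sq_dev f q \<partial>columns K d)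
        = (\<integral>f. (\<integral>y. ((dot n (f m) y)\<^sup>2 - c) * dot_sq_dev f q \<partial>p)
             \<partial>Pi_pmf ({..<K} - {j}) d (\<lambda>_. p))"
      using that finite_support ab
      by (subst integral_Pi_pmf_remove[where l = j]) (auto simp: dot_sq_dev_def)
    also have "\<dots> = 0"
    proof (rule integral_eq_const_on_support)
      fix f assume "f \<in> set_pmf (Pi_pmf ({..<K} - {j}) d (\<lambda>_. p))"
      then have "f m \<in> set_pmf p"
        using that set_Pi_pmfD[of "{..<K} - {j}" f d "\<lambda>_. p" m] by auto
      then show "(\<integral>y. ((dot n (f m) y)\<^sup>2 - c) * dot_sq_dev f q \<partial>p) = 0"
        using finite_support integral_dot_sq by (simp add: integrable_measure_pmf_finite)
    qed
    finally show ?thesis .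
  qed
  from kl q ne consider "k \<noteq> fst q" "k \<noteq> snd q" | "l \<noteq> fst q" "l \<noteq> snd q"
    by (cases q) (auto simp: offdiag_pairs_def)
  then show ?thesis
  proof cases
    case 1
    then show ?thesis
      using uncorrelated[of k l] dot_sq_dev_swap[of _ "(l, k)"] kl by (simp add: offdiag_pairs_def)
  next
    case 2
    then show ?thesis
      using uncorrelated[of l k] kl by (simp add: offdiag_pairs_def)
  qed
qed

lemma integral_dot_sq_dev_sq_le:
  assumes "(k, l) \<in> offdiag_pairs K"
  shows "(\<integral>f. (dot_sq_dev f (k, l))\<^sup>2 \<partial>columns K d) \<le> c"
proof -
  have "(\<integral>f. (dot_sq_dev f (k, l))\<^sup>2 \<partial>columns K d)
      \<le> (\<integral>f. (1 - 2 * c) * (dot n (f k) (f l))\<^sup>2 + c\<^sup>2 \<partial>columns K d)"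
  proof (intro integral_mono_AE integrable_columns AE_pmfI)
    fix f assume f: "f \<in> set_pmf (columns K d)"
    define x where "x = (dot n (f k) (f l))\<^sup>2"
    have "x \<le> 1"
      unfolding x_def using assms f by (intro dot_sq_le_one unit_norm column_in_set_pmf)
        (auto simp: offdiag_pairs_def)
    then have "x\<^sup>2 \<le> x"
      by (simp add: x_def power2_eq_square mult_left_le)
    then show "(dot_sq_dev f (k, l))\<^sup>2 \<le> (1 - 2 * c) * (dot n (f k) (f l))\<^sup>2 + c\<^sup>2"
      by (simp add: dot_sq_dev_def x_def[symmetric] power2_diff algebra_simps)
  qed
  also have "\<dots> = c - c\<^sup>2"
    using assms integrable_columns integral_dot_sq_columns
    by (simp add: offdiag_pairs_def power2_eq_square algebra_simps)
  also have "\<dots> \<le> c" by simp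
  finally show ?thesis .
qed

lemma integral_sum_dot_sq_dev_sq_le:
  "(\<integral>f. (\<Sum>q\<in>offdiag_pairs K. dot_sq_dev f q)\<^sup>2 \<partial>columns K d) \<le> 2 * c * (real K * (real K - 1))"
proof -
  let ?E = "\<lambda>q q'. \<integral>f. dot_sq_dev f q * dot_sq_dev f q' \<partial>columns K d"
  have pair_bound: "?E q q' \<le> (if q' = q then c else 0) + (if q' = prod.swap q then c else 0)"
    if q: "q \<in> offdiag_pairs K" and q': "q' \<in> offdiag_pairs K" for q q'
  proof -
    obtain k l where kl: "q = (k, l)" by (cases q)
    have "k \<noteq> l" using q kl by (simp add: offdiag_pairs_def)
    have "?E q q = (\<integral>f. (dot_sq_dev f (k, l))\<^sup>2 \<partial>columns K d)"
      unfolding kl power2_eq_square ..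
    then have diag: "?E q q \<le> c"
      using integral_dot_sq_dev_sq_le q kl by simp
    show ?thesis
      using diag isotropy_constant_nonneg dot_sq_dev_swap[of _ q] integral_dot_sq_dev_mult_eq_0[of k l K q' d] q q' kl
        \<open>k \<noteq> l\<close> by auto
  qed
  have swap_in: "prod.swap q \<in> offdiag_pairs K" if "q \<in> offdiag_pairs K" for q
    using that by (auto simp: offdiag_pairs_def)
  have "(\<integral>f. (\<Sum>q\<in>offdiag_pairs K. dot_sq_dev f q)\<^sup>2 \<partial>columns K d)
      = (\<Sum>q\<in>offdiag_pairs K. \<Sum>q'\<in>offdiag_pairs K. ?E q q')"
    by (simp add: power2_eq_square sum_product integrable_columns)
  also have "\<dots> \<le> (\<Sum>q\<in>offdiag_pairs K. \<Sum>q'\<in>offdiag_pairs K.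
      (if q' = q then c else 0) + (if q' = prod.swap q then c else 0))"
    by (intro sum_mono pair_bound)
  also have "\<dots> = (\<Sum>q\<in>offdiag_pairs K. 2 * c)"
    using swap_in finite_offdiag_pairs by (simp add: sum.distrib)
  also have "\<dots> = 2 * c * (real K * (real K - 1))"
    using card_offdiag_pairs by simp
  finally show ?thesis .
qed

lemma gram_sq_sum_eq_sum_dot_sq_dev:
  assumes f: "f \<in> set_pmf (columns K d)"
  shows "gram_sq_sum n K f
    = real K + real K * (real K - 1) * c + (\<Sum>q\<in>offdiag_pairs K. dot_sq_dev f q)"
proof -
  have "gram_sq_sum n K f = (\<Sum>k<K. (dot n (f k) (f k))\<^sup>2 + (\<Sum>l\<in>{..<K} - {k}. (dot n (f k) (f l))\<^sup>2))"
    unfolding gram_sq_sum_def by (intro sum.cong refl sum.remove) auto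
  also have "\<dots> = real K + (\<Sum>q\<in>offdiag_pairs K. (dot n (f (fst q)) (f (snd q)))\<^sup>2)"
    using unit_norm column_in_set_pmf[OF f]
    by (simp add: offdiag_pairs_def sum.distrib sum.Sigma case_prod_beta)
  finally show ?thesis
    using card_offdiag_pairs[of K]
    by (simp add: dot_sq_dev_def case_prod_beta sum_subtractf)
qed

lemma prob_gram_sq_sum_deviation:
  assumes "a > 0"
  shows "measure_pmf.prob (columns K d)
      {f. a \<le> \<bar>gram_sq_sum n K f - (real K + real K * (real K - 1) * c)\<bar>}
    \<le> 2 * c * (real K * (real K - 1)) / a\<^sup>2"
proof -
  let ?D = "\<lambda>f. \<Sum>q\<in>offdiag_pairs K. dot_sq_dev f q"
  let ?G = "\<lambda>f. gram_sq_sum n K f - (real K + real K * (real K - 1) * c)"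
  have "{f. a \<le> \<bar>?G f\<bar>} \<inter> set_pmf (columns K d) = {f. a \<le> \<bar>?D f\<bar>} \<inter> set_pmf (columns K d)"
    using gram_sq_sum_eq_sum_dot_sq_dev by auto
  then have "measure_pmf.prob (columns K d) {f. a \<le> \<bar>?G f\<bar>}
      = measure_pmf.prob (columns K d) {f. a \<le> \<bar>?D f\<bar>}"
    by (metis measure_Int_set_pmf)
  also have "\<dots> \<le> (\<integral>f. (?D f)\<^sup>2 \<partial>columns K d) / a\<^sup>2"
    using measure_pmf.second_moment_method[of ?D, OF _ integrable_columns assms] by simp
  also have "\<dots> \<le> 2 * c * (real K * (real K - 1)) / a\<^sup>2"
    by (intro divide_right_mono integral_sum_dot_sq_dev_sq_le) simp
  finally show ?thesis .
qed

end

section \<open>\<open>(N\<^sub>s, N\<^sub>h)\<close>-sequences\<close>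

definition block_entry :: "nat \<Rightarrow> nat \<Rightarrow> nat \<times> bool \<Rightarrow> real" where
  "block_entry Ns p c = (if p = fst c then (if snd c then 1 else -1) / sqrt (real Ns) else 0)"

lemma seq_pmf_eq_map_block_entry:
  "seq_pmf Ns Nh = map_pmf (\<lambda>c i. if i < Ns * Nh then block_entry Ns (i mod Nh) (c (i div Nh)) else 0)
     (Pi_pmf {..<Ns} (0, True) (\<lambda>_. pmf_of_set ({..<Nh} \<times> UNIV)))"
  unfolding seq_pmf_def block_entry_def by (intro map_pmf_cong refl) (auto simp: fun_eq_iff)

lemma block_entry_sq: "(block_entry Ns p c)\<^sup>2 = (if p = fst c then 1 / real Ns else 0)"
  by (simp add: block_entry_def power_divide)

context
  fixes Nh :: nat
  assumes Nh: "Nh \<ge> 1"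
begin

lemma set_pmf_block_choice:
  "set_pmf (pmf_of_set ({..<Nh} \<times> (UNIV :: bool set))) = {..<Nh} \<times> UNIV"
  using Nh by (intro set_pmf_of_set) (auto simp: lessThan_empty_iff intro: finite_cartesian_product)

lemma integral_block_choice:
  "(\<integral>c. g c \<partial>pmf_of_set ({..<Nh} \<times> UNIV)) = (\<Sum>p<Nh. g (p, True) + g (p, False)) / (2 * real Nh)"
proof -
  have "sum g ({..<Nh} \<times> UNIV) = (\<Sum>p<Nh. \<Sum>b\<in>UNIV. g (p, b))"
    by (simp add: sum.cartesian_product)
  then show ?thesis
    using Nh by (simp add: integral_pmf_of_set card_cartesian_product UNIV_bool add.commute
        lessThan_empty_iff)
qed

lemma integral_block_entry: "(\<integral>c. block_entry Ns p c \<partial>pmf_of_set ({..<Nh} \<times> UNIV)) = 0"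
  unfolding integral_block_choice block_entry_def by (auto intro!: sum.neutral)

lemma integral_block_entry_mult:
  assumes "p < Nh"
  shows "(\<integral>c. block_entry Ns p c * block_entry Ns p' c \<partial>pmf_of_set ({..<Nh} \<times> UNIV))
    = (if p = p' then 1 / real (Ns * Nh) else 0)"
proof -
  have "(\<Sum>a<Nh. block_entry Ns p (a, True) * block_entry Ns p' (a, True)
                + block_entry Ns p (a, False) * block_entry Ns p' (a, False))
      = (\<Sum>a<Nh. if a = p \<and> p = p' then 2 / real Ns else 0)"
    by (intro sum.cong refl) (auto simp: block_entry_def)
  also have "\<dots> = (if p = p' then 2 / real Ns else 0)"
    using assms by (simp add: sum.delta')
  finally show ?thesis
    unfolding integral_block_choice using Nh by simp
qed

lemma finite_set_seq_pmf: "finite (set_pmf (seq_pmf Ns Nh))"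
  unfolding seq_pmf_eq_map_block_entry by (auto intro!: finite_set_Pi_pmf simp: set_pmf_block_choice)

lemma seq_pmf_isotropic:
  assumes i: "i < Ns * Nh" and j: "j < Ns * Nh"
  shows "(\<integral>v. v i * v j \<partial>seq_pmf Ns Nh) = (if i = j then 1 / real (Ns * Nh) else 0)"
proof -
  let ?U = "pmf_of_set ({..<Nh} \<times> (UNIV :: bool set))"
  define m where "m = i div Nh"
  have m: "m < Ns" "j div Nh < Ns"
    using i j by (simp_all add: m_def less_mult_imp_div_less)
  have "(\<integral>v. v i * v j \<partial>seq_pmf Ns Nh)
      = (\<integral>c. block_entry Ns (i mod Nh) (c m) * block_entry Ns (j mod Nh) (c (j div Nh))
           \<partial>Pi_pmf {..<Ns} (0, True) (\<lambda>_. ?U))"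
    unfolding seq_pmf_eq_map_block_entry using i j by (simp add: m_def)
  also have "\<dots> = (\<integral>c. (\<integral>y. block_entry Ns (i mod Nh) y
                   * block_entry Ns (j mod Nh) ((c(m := y)) (j div Nh)) \<partial>?U)
           \<partial>Pi_pmf ({..<Ns} - {m}) (0, True) (\<lambda>_. ?U))"
    using m by (subst integral_Pi_pmf_remove[where l = m]) (auto simp: set_pmf_block_choice)
  also have "\<dots> = (if i = j then 1 / real (Ns * Nh) else 0)"
  proof (rule integral_eq_const_on_support)
    fix c
    show "(\<integral>y. block_entry Ns (i mod Nh) y * block_entry Ns (j mod Nh) ((c(m := y)) (j div Nh)) \<partial>?U)
      = (if i = j then 1 / real (Ns * Nh) else 0)"
    proof (cases "j div Nh = m")
      case True
      then have "i = j \<longleftrightarrow> i mod Nh = j mod Nh"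
        unfolding m_def by (metis div_mult_mod_eq)
      then show ?thesis
        using True Nh integral_block_entry_mult[of "i mod Nh" Ns "j mod Nh"] by simp
    next
      case False
      then show ?thesis
        using integral_block_entry[of Ns "i mod Nh"] m_def by auto
    qed
  qed
  finally show ?thesis .
qed

lemma seq_pmf_unit_norm:
  assumes Ns: "Ns \<ge> 1" and u: "u \<in> set_pmf (seq_pmf Ns Nh)"
  shows "dot (Ns * Nh) u u = 1"
proof -
  from u obtain c where c: "c \<in> set_pmf (Pi_pmf {..<Ns} (0, True) (\<lambda>_. pmf_of_set ({..<Nh} \<times> UNIV)))"
    and u_eq: "u = (\<lambda>i. if i < Ns * Nh then block_entry Ns (i mod Nh) (c (i div Nh)) else 0)"
    unfolding seq_pmf_eq_map_block_entry by auto
  have pos: "fst (c m) < Nh" if "m < Ns" for m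
    using set_Pi_pmfD[OF _ c, of m] that by (auto simp: set_pmf_block_choice)
  have index: "p + m * Nh < Ns * Nh" if "m < Ns" "p < Nh" for m p
  proof -
    have "p + m * Nh < (m + 1) * Nh" using that by simp
    also have "\<dots> \<le> Ns * Nh" using that by (intro mult_right_mono) auto
    finally show ?thesis .
  qed
  have "dot (Ns * Nh) u u = (\<Sum>m<Ns. \<Sum>p<Nh. (block_entry Ns p (c m))\<^sup>2)"
    unfolding dot_def sum_mult_product[of _ Ns Nh] u_eq using index
    by (intro sum.cong refl) (auto simp: power2_eq_square)
  also have "\<dots> = (\<Sum>m<Ns. 1 / real Ns)"
    using pos by (intro sum.cong refl) (simp add: block_entry_sq sum.delta')
  also have "\<dots> = 1"
    using Ns by simp
  finally show ?thesis .
qed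

lemma unit_isotropic_pmf_seq_pmf:
  assumes "Ns \<ge> 1"
  shows "unit_isotropic_pmf (Ns * Nh) (1 / real (Ns * Nh)) (seq_pmf Ns Nh)"
  using finite_set_seq_pmf seq_pmf_unit_norm[OF assms] seq_pmf_isotropic by unfold_locales

end

section \<open>The eigenvalue moments of \<open>S S\<^sup>T\<close>\<close>

lemma trace_gram:
  fixes f :: "nat \<Rightarrow> nat \<Rightarrow> real" and N K :: nat
  defines "S \<equiv> mat N K (\<lambda>(i, k). f k i)"
  shows "trace (S * S\<^sup>T) = (\<Sum>k<K. dot N (f k) (f k))"
proof -
  have "trace (S * S\<^sup>T) = (\<Sum>i<N. \<Sum>k<K. S $$ (i, k) * S\<^sup>T $$ (k, i))"
    by (rule trace_mult_eq_sum) (auto simp: S_def)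
  also have "\<dots> = (\<Sum>i<N. \<Sum>k<K. f k i * f k i)"
    by (intro sum.cong refl) (simp add: S_def)
  finally show ?thesis
    unfolding dot_def by (simp add: sum.swap[of _ "{..<N}"])
qed

lemma gram_mat_index:
  fixes f :: "nat \<Rightarrow> nat \<Rightarrow> real" and N K :: nat
  defines "S \<equiv> mat N K (\<lambda>(i, k). f k i)"
  assumes "k < K" "l < K"
  shows "(S\<^sup>T * S) $$ (k, l) = dot N (f k) (f l)"
  using assms unfolding S_def dot_def by (simp add: scalar_prod_def atLeast0LessThan)

lemma trace_gram_sq:
  fixes f :: "nat \<Rightarrow> nat \<Rightarrow> real" and N K :: nat
  defines "S \<equiv> mat N K (\<lambda>(i, k). f k i)"
  shows "trace ((S * S\<^sup>T) ^\<^sub>m 2) = gram_sq_sum N K f"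
proof -
  define G where "G = S\<^sup>T * S"
  have S: "S \<in> carrier_mat N K" and ST: "S\<^sup>T \<in> carrier_mat K N"
    unfolding S_def by auto
  then have G: "G \<in> carrier_mat K K" and SS: "S * S\<^sup>T \<in> carrier_mat N N"
    by (simp_all add: G_def)
  have "(S * S\<^sup>T) ^\<^sub>m 2 = (S * S\<^sup>T) * (S * S\<^sup>T)"
    using SS by (simp add: numeral_2_eq_2)
  also have "\<dots> = S * (S\<^sup>T * (S * S\<^sup>T))"
    by (rule assoc_mult_mat[OF S ST SS])
  also have "S\<^sup>T * (S * S\<^sup>T) = G * S\<^sup>T"
    unfolding G_def by (rule assoc_mult_mat[symmetric, OF ST S ST])
  finally have "trace ((S * S\<^sup>T) ^\<^sub>m 2) = trace (S * (G * S\<^sup>T))"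
    by (rule arg_cong)
  also have "\<dots> = trace ((G * S\<^sup>T) * S)"
    by (rule trace_mult_comm[OF S mult_carrier_mat[OF G ST]])
  also have "(G * S\<^sup>T) * S = G * (S\<^sup>T * S)"
    by (rule assoc_mult_mat[OF G ST S])
  also have "S\<^sup>T * S = G"
    unfolding G_def ..
  also have "trace (G * G) = gram_sq_sum N K f"
    unfolding trace_mult_eq_sum[OF G G] gram_sq_sum_def
  proof (intro sum.cong refl)
    fix k l assume "k \<in> {..<K}" "l \<in> {..<K}"
    then have "G $$ (k, l) = dot N (f k) (f l)" "G $$ (l, k) = dot N (f l) (f k)"
      unfolding G_def S_def by (simp_all only: lessThan_iff gram_mat_index)
    then show "G $$ (k, l) * G $$ (l, k) = (dot N (f k) (f l))\<^sup>2"
      using dot_commute[of N "f l" "f k"] by (simp add: power2_eq_square)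
  qed
  finally show ?thesis .
qed

lemma eig_moments_S_pmf:
  fixes Ns Nh K :: nat
  assumes "Ns \<ge> 1" "Nh \<ge> 1"
    and f: "f \<in> set_pmf (Pi_pmf {..<K} (\<lambda>_. 0) (\<lambda>_. seq_pmf Ns Nh))"
  defines "S \<equiv> mat (Ns * Nh) K (\<lambda>(i, k). f k i)"
  shows "eig_moment 1 (S * S\<^sup>T) = complex_of_real (real K / real (Ns * Nh))"
    and "eig_moment 2 (S * S\<^sup>T) = complex_of_real (gram_sq_sum (Ns * Nh) K f / real (Ns * Nh))"
proof -
  interpret unit_isotropic_pmf "Ns * Nh" "1 / real (Ns * Nh)" "seq_pmf Ns Nh"
    using assms(2,1) by (rule unit_isotropic_pmf_seq_pmf)
  have SS: "S * S\<^sup>T \<in> carrier_mat (Ns * Nh) (Ns * Nh)"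
    by (rule mult_carrier_mat) (auto simp: S_def)
  have "trace (S * S\<^sup>T) = real K"
    unfolding S_def trace_gram using unit_norm column_in_set_pmf[OF f] by simp
  then show "eig_moment 1 (S * S\<^sup>T) = complex_of_real (real K / real (Ns * Nh))"
    using eig_moment_eq_trace[OF SS, of 1] SS by simp
  show "eig_moment 2 (S * S\<^sup>T) = complex_of_real (gram_sq_sum (Ns * Nh) K f / real (Ns * Nh))"
    using eig_moment_eq_trace[OF SS, of 2] unfolding S_def trace_gram_sq .
qed

lemma eig_moment_1_S_pmf:
  assumes "Ns \<ge> 1" "Nh \<ge> 1" "S \<in> set_pmf (S_pmf Ns Nh K)"
  shows "eig_moment 1 (S * S\<^sup>T) = complex_of_real (real K / real (Ns * Nh))"
  using assms eig_moments_S_pmf(1)[OF assms(1,2)] by (auto simp: S_pmf_def)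

lemma eig_moment_2_deviation:
  fixes Ns Nh K :: nat
  assumes Ns: "Ns \<ge> 1" and Nh: "Nh \<ge> 1"
    and f: "f \<in> set_pmf (Pi_pmf {..<K} (\<lambda>_. 0) (\<lambda>_. seq_pmf Ns Nh))"
  defines "N \<equiv> real (Ns * Nh)" and "r \<equiv> real K / real (Ns * Nh)"
    and "S \<equiv> mat (Ns * Nh) K (\<lambda>(i, k). f k i)"
  shows "cmod (eig_moment 2 (S * S\<^sup>T) - complex_of_real (r + r * (r - 1 / N)))
    = \<bar>gram_sq_sum (Ns * Nh) K f - (real K + real K * (real K - 1) * (1 / N))\<bar> / N"
proof -
  have "N > 0" using Ns Nh by (simp add: N_def)
  have r_N: "r = real K / N" by (simp add: r_def N_def)
  have "cmod (eig_moment 2 (S * S\<^sup>T) - complex_of_real (r + r * (r - 1 / N)))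
      = \<bar>gram_sq_sum (Ns * Nh) K f / N - (r + r * (r - 1 / N))\<bar>"
    unfolding S_def eig_moments_S_pmf(2)[OF Ns Nh f] N_def[symmetric] of_real_diff[symmetric]
    by (rule norm_of_real)
  also have "gram_sq_sum (Ns * Nh) K f / N - (r + r * (r - 1 / N))
      = (gram_sq_sum (Ns * Nh) K f - (real K + real K * (real K - 1) * (1 / N))) / N"
    using \<open>N > 0\<close> by (simp add: r_N field_simps)
  finally show ?thesis
    using \<open>N > 0\<close> by simp
qed

lemma prob_eig_moment_2_deviation:
  fixes Ns Nh K :: nat and \<delta> :: real
  assumes Ns: "Ns \<ge> 1" and Nh: "Nh \<ge> 1" and \<delta>: "\<delta> > 0"
  defines "N \<equiv> real (Ns * Nh)" and "r \<equiv> real K / real (Ns * Nh)"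
  shows "measure_pmf.prob (S_pmf Ns Nh K)
      {S. \<delta> \<le> cmod (eig_moment 2 (S * S\<^sup>T) - complex_of_real (r + r * (r - 1 / N)))}
    \<le> 2 * r * (r - 1 / N) * (1 / N) / \<delta>\<^sup>2"
proof -
  interpret unit_isotropic_pmf "Ns * Nh" "1 / N" "seq_pmf Ns Nh"
    unfolding N_def using Nh Ns by (rule unit_isotropic_pmf_seq_pmf)
  let ?P = "Pi_pmf {..<K} (\<lambda>_. 0) (\<lambda>_. seq_pmf Ns Nh)"
  let ?mat = "\<lambda>f. mat (Ns * Nh) K (\<lambda>(i, k). f k i)"
  let ?G = "\<lambda>f. gram_sq_sum (Ns * Nh) K f - (real K + real K * (real K - 1) * (1 / N))"
  have "N > 0" using Ns Nh by (simp add: N_def)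
  have r_N: "r = real K / N" by (simp add: r_def N_def)
  have "?mat -` {S. \<delta> \<le> cmod (eig_moment 2 (S * S\<^sup>T) - complex_of_real (r + r * (r - 1 / N)))}
      \<inter> set_pmf ?P \<subseteq> {f. \<delta> * N \<le> \<bar>?G f\<bar>}"
  proof (intro subsetI CollectI)
    fix f assume "f \<in> ?mat -` {S. \<delta> \<le> cmod (eig_moment 2 (S * S\<^sup>T)
      - complex_of_real (r + r * (r - 1 / N)))} \<inter> set_pmf ?P"
    then have "f \<in> set_pmf ?P"
      and "\<delta> \<le> cmod (eig_moment 2 (?mat f * (?mat f)\<^sup>T) - complex_of_real (r + r * (r - 1 / N)))"
      by (simp_all only: Int_iff vimage_eq mem_Collect_eq)
    then show "\<delta> * N \<le> \<bar>?G f\<bar>"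
      using \<open>N > 0\<close> eig_moment_2_deviation[OF Ns Nh, of f K]
      by (simp only: N_def r_def pos_le_divide_eq)
  qed
  then have "measure_pmf.prob (S_pmf Ns Nh K)
      {S. \<delta> \<le> cmod (eig_moment 2 (S * S\<^sup>T) - complex_of_real (r + r * (r - 1 / N)))}
      \<le> measure_pmf.prob ?P {f. \<delta> * N \<le> \<bar>?G f\<bar>}"
    unfolding S_pmf_def measure_map_pmf
    by (subst measure_Int_set_pmf[symmetric]) (intro measure_pmf.finite_measure_mono; simp)
  also have "\<dots> \<le> 2 * (1 / N) * (real K * (real K - 1)) / (\<delta> * N)\<^sup>2"
    using \<delta> \<open>N > 0\<close> by (intro prob_gram_sq_sum_deviation) simp
  also have "\<dots> = 2 * r * (r - 1 / N) * (1 / N) / \<delta>\<^sup>2"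
    using \<open>N > 0\<close> by (simp add: r_N field_simps power2_eq_square)
  finally show ?thesis .
qed

section \<open>Convergence in probability\<close>

definition conv_in_prob :: "(nat \<Rightarrow> 'a pmf) \<Rightarrow> (nat \<Rightarrow> 'a \<Rightarrow> 'b::metric_space) \<Rightarrow> 'b \<Rightarrow> bool" where
  "conv_in_prob M X c \<longleftrightarrow>
     (\<forall>\<epsilon>>0. (\<lambda>n. measure_pmf.prob (M n) {x. dist (X n x) c > \<epsilon>}) \<longlonglongrightarrow> 0)"

lemma prob_tendsto_0_mono:
  assumes "eventually (\<lambda>n. A n \<inter> set_pmf (M n) \<subseteq> B n) sequentially"
    and "(\<lambda>n. measure_pmf.prob (M n) (B n)) \<longlonglongrightarrow> 0"
  shows "(\<lambda>n. measure_pmf.prob (M n) (A n)) \<longlonglongrightarrow> 0"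
proof (rule tendsto_sandwich[OF _ _ tendsto_const assms(2)])
  show "eventually (\<lambda>n. measure_pmf.prob (M n) (A n) \<le> measure_pmf.prob (M n) (B n)) sequentially"
    using assms(1)
  proof eventually_elim
    case (elim n)
    have "measure_pmf.prob (M n) (A n) = measure_pmf.prob (M n) (A n \<inter> set_pmf (M n))"
      by (simp add: measure_Int_set_pmf)
    also have "\<dots> \<le> measure_pmf.prob (M n) (B n)"
      using elim by (intro measure_pmf.finite_measure_mono) auto
    finally show ?case .
  qed
qed simp

lemma conv_in_prob_tendsto_centre:
  assumes a: "a \<longlonglongrightarrow> c"
    and conc: "\<And>\<delta>. \<delta> > 0 \<Longrightarrow> (\<lambda>n. measure_pmf.prob (M n) {x. \<delta> \<le> dist (X n x) (a n)}) \<longlonglongrightarrow> 0"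
  shows "conv_in_prob M X c"
  unfolding conv_in_prob_def
proof (intro allI impI)
  fix \<epsilon> :: real assume "\<epsilon> > 0"
  have "eventually (\<lambda>n. dist (a n) c < \<epsilon> / 2) sequentially"
    by (rule tendstoD[OF a]) (use \<open>\<epsilon> > 0\<close> in simp)
  then have "eventually (\<lambda>n. {x. dist (X n x) c > \<epsilon>} \<inter> set_pmf (M n)
                              \<subseteq> {x. \<epsilon> / 2 \<le> dist (X n x) (a n)}) sequentially"
  proof eventually_elim
    case (elim n)
    show ?case
    proof (intro subsetI CollectI)
      fix x assume "x \<in> {x. dist (X n x) c > \<epsilon>} \<inter> set_pmf (M n)"
      then have "\<epsilon> < dist (X n x) c" by simp
      with elim dist_triangle[of "X n x" c "a n"] show "\<epsilon> / 2 \<le> dist (X n x) (a n)"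
        by linarith
    qed
  qed
  then show "(\<lambda>n. measure_pmf.prob (M n) {x. dist (X n x) c > \<epsilon>}) \<longlonglongrightarrow> 0"
    by (rule prob_tendsto_0_mono[OF _ conc[OF half_gt_zero[OF \<open>\<epsilon> > 0\<close>]]])
qed

lemma conv_in_prob_deterministic:
  assumes "eventually (\<lambda>n. \<forall>x\<in>set_pmf (M n). X n x = a n) sequentially" and "a \<longlonglongrightarrow> c"
  shows "conv_in_prob M X c"
proof (rule conv_in_prob_tendsto_centre[OF assms(2)])
  fix \<delta> :: real assume "\<delta> > 0"
  have "eventually (\<lambda>n. {x. \<delta> \<le> dist (X n x) (a n)} \<inter> set_pmf (M n) \<subseteq> {}) sequentially"
    using assms(1) by eventually_elim (use \<open>\<delta> > 0\<close> in auto)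
  then show "(\<lambda>n. measure_pmf.prob (M n) {x. \<delta> \<le> dist (X n x) (a n)}) \<longlonglongrightarrow> 0"
    by (rule prob_tendsto_0_mono) simp
qed

lemma conv_in_prob_Pair:
  assumes X: "conv_in_prob M X a" and Y: "conv_in_prob M Y b"
  shows "conv_in_prob M (\<lambda>n x. (X n x, Y n x)) (a, b)"
  unfolding conv_in_prob_def
proof (intro allI impI)
  fix \<epsilon> :: real assume \<epsilon>: "\<epsilon> > 0"
  let ?P = "\<lambda>n A. measure_pmf.prob (M n) A"
  let ?A = "\<lambda>n. {x. dist (X n x) a > \<epsilon> / 2}" and ?B = "\<lambda>n. {x. dist (Y n x) b > \<epsilon> / 2}"
  have "(\<lambda>n. ?P n (?A n) + ?P n (?B n)) \<longlonglongrightarrow> 0 + 0"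
    using X Y half_gt_zero[OF \<epsilon>] unfolding conv_in_prob_def by (intro tendsto_add) blast+
  then have lim: "(\<lambda>n. ?P n (?A n) + ?P n (?B n)) \<longlonglongrightarrow> 0"
    by simp
  have le:  "?P n {x. dist (X n x, Y n x) (a, b) > \<epsilon>} \<le> ?P n (?A n) + ?P n (?B n)" for n
  proof -
    have "{x. dist (X n x, Y n x) (a, b) > \<epsilon>} \<subseteq> ?A n \<union> ?B n"
    proof (intro subsetI)
      fix x assume "x \<in> {x. dist (X n x, Y n x) (a, b) > \<epsilon>}"
      moreover have "dist (X n x, Y n x) (a, b) \<le> dist (X n x) a + dist (Y n x) b"
        unfolding dist_Pair_Pair
        using sqrt_sum_squares_le_sum_abs[of "dist (X n x) a" "dist (Y n x) b"] by simp
      ultimately show "x \<in> ?A n \<union> ?B n" by auto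
    qed
    then have "?P n {x. dist (X n x, Y n x) (a, b) > \<epsilon>} \<le> ?P n (?A n \<union> ?B n)"
      by (intro measure_pmf.finite_measure_mono) auto
    also have "\<dots> \<le> ?P n (?A n) + ?P n (?B n)"
      by (rule measure_Un_le) auto
    finally show ?thesis .
  qed
  show "(\<lambda>n. ?P n {x. dist (X n x, Y n x) (a, b) > \<epsilon>}) \<longlonglongrightarrow> 0"
    by (rule tendsto_sandwich[OF always_eventually always_eventually tendsto_const lim])
      (use le in auto)
qed

lemma conv_in_prob_isCont:
  assumes X: "conv_in_prob M X a" and g: "isCont g a"
  shows "conv_in_prob M (\<lambda>n x. g (X n x)) (g a)"
  unfolding conv_in_prob_def
proof (intro allI impI)
  fix \<epsilon> :: real assume "\<epsilon> > 0"
  with g obtain \<delta> where "\<delta> > 0" and \<delta>: "\<forall>y. dist y a < \<delta> \<longrightarrow> dist (g y) (g a) < \<epsilon>"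
    unfolding continuous_at_eps_delta by blast
  have sub: "{x. dist (g (X n x)) (g a) > \<epsilon>} \<inter> set_pmf (M n) \<subseteq> {x. dist (X n x) a > \<delta> / 2}" for n
  proof (intro subsetI CollectI)
    fix x assume "x \<in> {x. dist (g (X n x)) (g a) > \<epsilon>} \<inter> set_pmf (M n)"
    then have "\<not> dist (X n x) a < \<delta>"
      using \<delta> by auto
    then show "dist (X n x) a > \<delta> / 2"
      using \<open>\<delta> > 0\<close> by simp
  qed
  have "(\<lambda>n. measure_pmf.prob (M n) {x. dist (X n x) a > \<delta> / 2}) \<longlonglongrightarrow> 0"
    using X half_gt_zero[OF \<open>\<delta> > 0\<close>] unfolding conv_in_prob_def by blast
  then show "(\<lambda>n. measure_pmf.prob (M n) {x. dist (g (X n x)) (g a) > \<epsilon>}) \<longlonglongrightarrow> 0"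
    by (rule prob_tendsto_0_mono[OF always_eventually[OF allI[OF sub]]])
qed

lemma conv_in_prob_eig_moment_1:
  fixes Ns :: nat and \<beta> :: real and K :: "nat \<Rightarrow> nat"
  assumes Ns: "Ns \<ge> 1" and Klim: "(\<lambda>Nh. real (K Nh) / real (Ns * Nh)) \<longlonglongrightarrow> \<beta>"
  shows "conv_in_prob (\<lambda>Nh. S_pmf Ns Nh (K Nh)) (\<lambda>Nh S. eig_moment 1 (S * S\<^sup>T))
    (complex_of_real \<beta>)"
proof (rule conv_in_prob_deterministic)
  show "eventually (\<lambda>Nh. \<forall>S\<in>set_pmf (S_pmf Ns Nh (K Nh)).
      eig_moment 1 (S * S\<^sup>T) = complex_of_real (real (K Nh) / real (Ns * Nh))) sequentially"
    using eventually_ge_at_top[of 1] by eventually_elim (use eig_moment_1_S_pmf Ns in blast)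
qed (rule tendsto_of_real[OF Klim])

lemma conv_in_prob_eig_moment_2:
  fixes Ns :: nat and \<beta> :: real and K :: "nat \<Rightarrow> nat"
  assumes Ns: "Ns \<ge> 1" and Klim: "(\<lambda>Nh. real (K Nh) / real (Ns * Nh)) \<longlonglongrightarrow> \<beta>"
  shows "conv_in_prob (\<lambda>Nh. S_pmf Ns Nh (K Nh)) (\<lambda>Nh S. eig_moment 2 (S * S\<^sup>T))
    (complex_of_real (\<beta> * (1 + \<beta>)))"
proof -
  define r where "r Nh = real (K Nh) / real (Ns * Nh)" for Nh
  define \<epsilon> where "\<epsilon> Nh = 1 / real (Ns * Nh)" for Nh
  have r: "r \<longlonglongrightarrow> \<beta>"
    using Klim unfolding r_def[abs_def] .
  have \<epsilon>: "\<epsilon> \<longlonglongrightarrow> 0"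
    unfolding \<epsilon>_def[abs_def] using tendsto_mult[OF tendsto_const lim_inverse_n', of "1 / real Ns"] by simp
  show ?thesis
  proof (rule conv_in_prob_tendsto_centre)
    have "(\<lambda>Nh. complex_of_real (r Nh + r Nh * (r Nh - \<epsilon> Nh)))
        \<longlonglongrightarrow> complex_of_real (\<beta> + \<beta> * (\<beta> - 0))"
      by (intro tendsto_intros r \<epsilon>)
    then show "(\<lambda>Nh. complex_of_real (r Nh + r Nh * (r Nh - \<epsilon> Nh)))
        \<longlonglongrightarrow> complex_of_real (\<beta> * (1 + \<beta>))"
      by (simp add: algebra_simps)
  next
    fix \<delta> :: real assume "\<delta> > 0"
    have "(\<lambda>Nh. 2 * r Nh * (r Nh - \<epsilon> Nh) * \<epsilon> Nh / \<delta>\<^sup>2) \<longlonglongrightarrow> 2 * \<beta> * (\<beta> - 0) * 0 / \<delta>\<^sup>2"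
      by (intro tendsto_intros r \<epsilon>) (use \<open>\<delta> > 0\<close> in simp)
    then have bound: "(\<lambda>Nh. 2 * r Nh * (r Nh - \<epsilon> Nh) * \<epsilon> Nh / \<delta>\<^sup>2) \<longlonglongrightarrow> 0"
      by simp
    show "(\<lambda>Nh. measure_pmf.prob (S_pmf Ns Nh (K Nh))
        {S. \<delta> \<le> dist (eig_moment 2 (S * S\<^sup>T)) (complex_of_real (r Nh + r Nh * (r Nh - \<epsilon> Nh)))})
      \<longlonglongrightarrow> 0"
    proof (rule tendsto_sandwich[OF always_eventually _ tendsto_const bound])
      show "eventually (\<lambda>Nh. measure_pmf.prob (S_pmf Ns Nh (K Nh))
          {S. \<delta> \<le> dist (eig_moment 2 (S * S\<^sup>T)) (complex_of_real (r Nh + r Nh * (r Nh - \<epsilon> Nh)))}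
        \<le> 2 * r Nh * (r Nh - \<epsilon> Nh) * \<epsilon> Nh / \<delta>\<^sup>2) sequentially"
        using eventually_ge_at_top[of 1]
        by eventually_elim
          (use Ns \<open>\<delta> > 0\<close> prob_eig_moment_2_deviation in \<open>simp add: r_def \<epsilon>_def dist_norm\<close>)
    qed simp
  qed
qed

lemma conv_in_prob_min_energy_per_bit:
  assumes X: "conv_in_prob M X (complex_of_real \<beta>)" and "\<beta> \<noteq> 0"
  shows "conv_in_prob M (\<lambda>n x. complex_of_real (\<beta> * ln 2) / X n x) (complex_of_real (ln 2))"
proof -
  have "conv_in_prob M (\<lambda>n x. complex_of_real (\<beta> * ln 2) / X n x)
      (complex_of_real (\<beta> * ln 2) / complex_of_real \<beta>)"
    using \<open>\<beta> \<noteq> 0\<close> by (intro conv_in_prob_isCont[OF X] continuous_intros) auto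
  then show ?thesis
    using \<open>\<beta> \<noteq> 0\<close> by simp
qed

lemma conv_in_prob_wideband_slope:
  assumes X: "conv_in_prob M X (complex_of_real \<beta>)"
    and Y: "conv_in_prob M Y (complex_of_real (\<beta> * (1 + \<beta>)))" and "\<beta> > 0"
  shows "conv_in_prob M (\<lambda>n x. 2 * (X n x)\<^sup>2 / Y n x) (complex_of_real (2 * \<beta> / (1 + \<beta>)))"
proof -
  have "\<beta> * (1 + \<beta>) \<noteq> 0"
    using \<open>\<beta> > 0\<close> by simp
  then have "isCont (\<lambda>z. 2 * (fst z)\<^sup>2 / snd z) (complex_of_real \<beta>, complex_of_real (\<beta> * (1 + \<beta>)))"
    by (intro continuous_intros) (simp only: snd_conv of_real_eq_0_iff not_False_eq_True)
  from conv_in_prob_isCont[OF conv_in_prob_Pair[OF X Y] this]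
  have "conv_in_prob M (\<lambda>n x. 2 * (X n x)\<^sup>2 / Y n x)
      (2 * (complex_of_real \<beta>)\<^sup>2 / complex_of_real (\<beta> * (1 + \<beta>)))"
    by (simp only: fst_conv snd_conv)
  moreover have "2 * (complex_of_real \<beta>)\<^sup>2 / complex_of_real (\<beta> * (1 + \<beta>))
      = complex_of_real (2 * \<beta> / (1 + \<beta>))"
    using \<open>\<beta> > 0\<close> by (simp add: power2_eq_square)
  ultimately show ?thesis
    by simp
qed

theorem mainTheorem6:
  fixes Ns :: nat and \<beta> :: real and K :: "nat \<Rightarrow> nat"
  assumes Ns: "Ns \<ge> 1"
    and beta: "\<beta> > 0"
    and Kpos: "\<And>Nh. Nh \<ge> 1 \<Longrightarrow> K Nh > 0"
    and Klim: "(\<lambda>Nh. real (K Nh) / real (Ns * Nh)) \<longlonglongrightarrow> \<beta>"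
  shows
    "(\<forall>Nh\<ge>1. \<forall>S\<in>set_pmf (S_pmf Ns Nh (K Nh)).
        eig_moment 1 (S * S\<^sup>T) = complex_of_real (real (K Nh) / real (Ns * Nh)))
     \<and> (\<forall>\<epsilon>>0. (\<lambda>Nh. measure_pmf.prob (S_pmf Ns Nh (K Nh))
            {S. cmod (eig_moment 2 (S * S\<^sup>T) - complex_of_real (\<beta> * (1 + \<beta>))) > \<epsilon>})
          \<longlonglongrightarrow> 0)
     \<and> (\<forall>Nh\<ge>1. \<forall>S\<in>set_pmf (S_pmf Ns Nh (K Nh)).
        complex_of_real (real (K Nh) / real (Ns * Nh) * ln 2) / eig_moment 1 (S * S\<^sup>T)
          = complex_of_real (ln 2))
     \<and> (\<forall>\<epsilon>>0. (\<lambda>Nh. measure_pmf.prob (S_pmf Ns Nh (K Nh))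
            {S. cmod (complex_of_real (\<beta> * ln 2) / eig_moment 1 (S * S\<^sup>T)
                      - complex_of_real (ln 2)) > \<epsilon>})
          \<longlonglongrightarrow> 0)
     \<and> (\<forall>\<epsilon>>0. (\<lambda>Nh. measure_pmf.prob (S_pmf Ns Nh (K Nh))
            {S. cmod (2 * (eig_moment 1 (S * S\<^sup>T))\<^sup>2 / eig_moment 2 (S * S\<^sup>T)
                      - complex_of_real (2 * \<beta> / (1 + \<beta>))) > \<epsilon>})
          \<longlonglongrightarrow> 0)"
proof -
  let ?M = "\<lambda>Nh. S_pmf Ns Nh (K Nh)"
  have m1: "eig_moment 1 (S * S\<^sup>T) = complex_of_real (real (K Nh) / real (Ns * Nh))"
    if "Nh \<ge> 1" "S \<in> set_pmf (?M Nh)" for Nh S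
    using eig_moment_1_S_pmf[OF Ns that] .
  have eta_exact: "complex_of_real (real (K Nh) / real (Ns * Nh) * ln 2) / eig_moment 1 (S * S\<^sup>T)
      = complex_of_real (ln 2)" if "Nh \<ge> 1" "S \<in> set_pmf (?M Nh)" for Nh S
    using m1[OF that] Kpos[OF that(1)] Ns that(1) by simp
  have conv1: "conv_in_prob ?M (\<lambda>Nh S. eig_moment 1 (S * S\<^sup>T)) (complex_of_real \<beta>)"
    by (rule conv_in_prob_eig_moment_1[OF Ns Klim])
  have conv2: "conv_in_prob ?M (\<lambda>Nh S. eig_moment 2 (S * S\<^sup>T)) (complex_of_real (\<beta> * (1 + \<beta>)))"
    by (rule conv_in_prob_eig_moment_2[OF Ns Klim])
  show ?thesis
    using m1 eta_exact conv2 conv_in_prob_min_energy_per_bit[OF conv1]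
      conv_in_prob_wideband_slope[OF conv1 conv2 beta] beta
    unfolding conv_in_prob_def dist_norm by auto
qed

end
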